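(* In the generic model, for every rooted forest $w$ the polynomial $\mathcal P(w)\in\mathbb R[x]$ satisfies $$\mathcal P(w)-\frac{(-c_{-1}x)^{|w|}}{w!}\in\mathbb R[x]_{<|w|},$$ i.e. its coefficient of $x^{|w|}$ is $(-c_{-1})^{|w|}/w!$ and it has no higher terms.
   Context: Generic model: $f\colon[0,\infty)\to\mathbb R$ continuous with $f(\zeta)-c/\zeta=O(\zeta^{-1-\epsilon})$ at infinity; Mellin transform $F(z)=\int_0^\infty f(\zeta)\zeta^{-z}d\zeta=\sum_{n\ge-1}c_nz^n$ near $0$. $H_R$ is the Connes–Kreimer Hopf algebra of rooted trees (forests $w$, $|w|$ number of nodes, $w_v$ subtree at node $v$, antipode $S$). $\phi_s(w)=s^{-z|w|}\prod_{v}F(z|w_v|)$ (multiplicative), $\phi_{R,s}=\phi_\mu^{\star-1}\star\phi_s$ for fixed $\mu>0$, and $\mathcal P(w)\in\mathbb R[x]$ is the polynomial with $\lim_{z\to0}\phi_{R,s}(w)=\mathcal P(w)(\ln\frac s\mu)$. Tree factorial: $w!=\prod_{v\in V(w)}|w_v|$. *)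

theory Defs
  imports "HOL-Analysis.Analysis" "HOL-Library.Landau_Symbols"
          "HOL-Computational_Algebra.Polynomial"
begin

text \<open>Rooted trees; a rooted forest is a list of rooted trees (the order is
irrelevant for everything below, since all maps used are multiplicative/symmetric).\<close>
datatype rtree = Node "rtree list"

fun nodes :: "rtree \<Rightarrow> nat" where
  "nodes (Node ts) = Suc (sum_list (map nodes ts))"

definition fnodes :: "rtree list \<Rightarrow> nat" where
  "fnodes w = sum_list (map nodes w)"

text \<open>Tree factorial  w! = prod over nodes v of |w_v|.\<close>
fun tfact :: "rtree \<Rightarrow> nat" where
  "tfact (Node ts) = nodes (Node ts) * prod_list (map tfact ts)"

definition ffact :: "rtree list \<Rightarrow> nat" where
  "ffact w = prod_list (map tfact w)"

text \<open>Coproduct terms.  Each pair (a,b) is a term a \<otimes> b of the coproduct;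
a is the pruned forest, b the trunk (empty forest = unit 1).\<close>
fun comb_cop :: "('a list \<times> 'a list) list list \<Rightarrow> ('a list \<times> 'a list) list" where
  "comb_cop [] = [([], [])]"
| "comb_cop (c # cs) = [(a @ a', b @ b'). (a, b) \<leftarrow> c, (a', b') \<leftarrow> comb_cop cs]"

text \<open>Connes--Kreimer coproduct of a tree via
  Delta(B+(F)) = B+(F) \<otimes> 1 + (id \<otimes> B+) Delta(F).  The first term is T \<otimes> 1.\<close>
fun tcop :: "rtree \<Rightarrow> (rtree list \<times> rtree list) list" where
  "tcop (Node ts) = ([Node ts], []) #
      map (\<lambda>(a, b). (a, [Node b])) (comb_cop (map tcop ts))"

definition fcop :: "rtree list \<Rightarrow> (rtree list \<times> rtree list) list" where
  "fcop w = comb_cop (map tcop w)"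

definition conv :: "(rtree list \<Rightarrow> real) \<Rightarrow> (rtree list \<Rightarrow> real) \<Rightarrow> rtree list \<Rightarrow> real" where
  "conv \<alpha> \<beta> w = sum_list (map (\<lambda>(a, b). \<alpha> a * \<beta> b) (fcop w))"

text \<open>Convolution inverse of a character chi (= chi o S), by the standard recursion
  chi^{-1}(T) = - sum_{terms a \<otimes> b of Delta T other than T \<otimes> 1} chi^{-1}(a) chi(b),
extended multiplicatively to forests.  The nat argument is fuel (at least the
number of nodes), which makes the recursion primitive.\<close>
fun cinv_aux :: "(rtree list \<Rightarrow> real) \<Rightarrow> nat \<Rightarrow> rtree list \<Rightarrow> real" where
  "cinv_aux chi 0 w = 1"
| "cinv_aux chi (Suc n) w =
     prod_list (map (\<lambda>t. - sum_list (map (\<lambda>(a, b). cinv_aux chi n a * chi b) (tl (tcop t)))) w)"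

definition cinv :: "(rtree list \<Rightarrow> real) \<Rightarrow> rtree list \<Rightarrow> real" where
  "cinv chi w = cinv_aux chi (fnodes w) w"

fun vprod :: "(real \<Rightarrow> real) \<Rightarrow> real \<Rightarrow> rtree \<Rightarrow> real" where
  "vprod F z (Node ts) = F (z * real (nodes (Node ts))) * prod_list (map (vprod F z) ts)"

definition phi :: "(real \<Rightarrow> real) \<Rightarrow> real \<Rightarrow> real \<Rightarrow> rtree list \<Rightarrow> real" where
  "phi F s z w = prod_list (map (\<lambda>t. s powr (- (z * real (nodes t))) * vprod F z t) w)"

definition phiR :: "(real \<Rightarrow> real) \<Rightarrow> real \<Rightarrow> real \<Rightarrow> real \<Rightarrow> rtree list \<Rightarrow> real" where
  "phiR F \<mu> s z w = conv (cinv (phi F \<mu> z)) (phi F s z) w"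

definition Lser :: "real \<Rightarrow> (nat \<Rightarrow> real) \<Rightarrow> real \<Rightarrow> real" where
  "Lser cm cn z = cm / z + (\<Sum>n. cn n * z ^ n)"

end

theory Submission
  imports Defs
begin

text \<open>
  Write \<open>L = ln (s/\<mu>)\<close>.  Since \<open>\<phi>\<^sub>s(b) = exp (- L z |b|) \<phi>\<^sub>\<mu>(b)\<close>, expanding the
  renormalised value \<open>\<phi>\<^sub>R\<^sub>,\<^sub>s(w) = \<Sum> \<phi>\<^sub>\<mu>\<^sup>-\<^sup>1(a) \<phi>\<^sub>s(b)\<close> (sum over the coproduct
  terms \<open>a \<otimes> b\<close> of \<open>w\<close>) in powers of \<open>L\<close> gives the coefficients
  \<open>(-L)\<^sup>j/j! \<cdot> M\<^sub>j(z)\<close>, where the moment \<open>M\<^sub>j(z) = \<Sum> \<phi>\<^sub>\<mu>\<^sup>-\<^sup>1(a) \<phi>\<^sub>\<mu>(b) (z|b|)\<^sup>j\<close>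
  weights every term by the size of its trunk \<open>b\<close>.  The heart of the proof is the
  invariant (\<open>moment_data\<close>): for a forest with \<open>n\<close> nodes every term has a pole of
  order at most \<open>n\<close> at \<open>z = 0\<close>, every moment \<open>M\<^sub>j(z)\<close> converges, the limits vanish
  for \<open>j > n\<close>, and the top one equals \<open>n! c\<^sub>-\<^sub>1\<^sup>n / w!\<close>.

  By induction over trees it holds for all
  coproducts; the limit of \<open>\<phi>\<^sub>R\<^sub>,\<^sub>s(w)\<close> is then the polynomial
  \<open>\<Sum>\<^sub>j\<^sub>\<le>\<^sub>n (-L)\<^sup>j M\<^sub>j / j!\<close> with leading coefficient \<open>(-c\<^sub>-\<^sub>1)\<^sup>n / w!\<close>.  Only the
  Laurent expansion of the Mellin transform at \<open>0\<close> enters the argument.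
\<close>

lemma nodes_pos: "nodes t > 0"
  by (cases t) auto

lemma fnodes_Nil [simp]: "fnodes [] = 0"
  and fnodes_Cons [simp]: "fnodes (t # ts) = nodes t + fnodes ts"
  and fnodes_append [simp]: "fnodes (u @ v) = fnodes u + fnodes v"
  and nodes_Node [simp]: "nodes (Node ts) = Suc (fnodes ts)"
  by (simp_all add: fnodes_def)

declare nodes.simps [simp del]

lemma fnodes_eq_0_iff: "fnodes w = 0 \<longleftrightarrow> w = []"
  using nodes_pos by (cases w) auto

lemma nodes_le_fnodes: "t \<in> set w \<Longrightarrow> nodes t \<le> fnodes w"
  by (induction w) auto

lemma fcop_Nil [simp]: "fcop [] = [([], [])]"
  by (simp add: fcop_def)

lemma fcop_Cons: "fcop (t # ws) = [(fst x @ fst y, snd x @ snd y). x \<leftarrow> tcop t, y \<leftarrow> fcop ws]"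
  by (simp add: fcop_def split_def)

lemma tcop_Node: "tcop (Node ts) = ([Node ts], []) # map (\<lambda>(u, v). (u, [Node v])) (fcop ts)"
  by (simp add: fcop_def)

declare tcop.simps [simp del]

text \<open>This is the
  well-foundedness behind the recursive definition of the counterterm.\<close>

lemma fcop_pruned_size:
  assumes "\<forall>t\<in>set w. \<forall>x\<in>set (tcop t). fnodes (fst x) \<le> nodes t"
  shows "x \<in> set (fcop w) \<Longrightarrow> fnodes (fst x) \<le> fnodes w"
  using assms
proof (induction w arbitrary: x)
  case (Cons t ws)
  then show ?case by (fastforce simp: fcop_Cons intro: add_mono)
qed simp

lemma tcop_pruned_size: "x \<in> set (tcop t) \<Longrightarrow> fnodes (fst x) \<le> nodes t"
proof (induction t arbitrary: x)
  case (Node ts)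
  have "fnodes u \<le> fnodes ts" if "(u, v) \<in> set (fcop ts)" for u v
    using fcop_pruned_size[of ts "(u, v)"] Node.IH that by auto
  with Node.prems show ?case by (force simp: tcop_Node le_SucI)
qed

lemma proper_term_size:
  assumes "t \<in> set w" and "(u, v) \<in> set (tl (tcop t))"
  shows "fnodes u < fnodes w"
proof -
  obtain ts where t: "t = Node ts" by (cases t)
  with assms(2) obtain v' where "(u, v') \<in> set (fcop ts)" by (auto simp: tcop_Node)
  then have "fnodes u \<le> fnodes ts"
    using fcop_pruned_size[of ts "(u, v')"] tcop_pruned_size by auto
  then show ?thesis using nodes_le_fnodes[OF assms(1)] t by simp
qed

lemma cinv_aux_fuel:
  "fnodes w \<le> N \<Longrightarrow> fnodes w \<le> N' \<Longrightarrow> cinv_aux chi N w = cinv_aux chi N' w"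
proof (induction N arbitrary: N' w)
  case 0
  then show ?case by (cases N') (simp_all add: fnodes_eq_0_iff)
next
  case (Suc N)
  show ?case
  proof (cases N')
    case 0
    with Suc.prems show ?thesis by (simp add: fnodes_eq_0_iff)
  next
    case (Suc N'')
    have "cinv_aux chi N u = cinv_aux chi N'' u"
      if "t \<in> set w" and "(u, v) \<in> set (tl (tcop t))" for t u v
      using Suc.IH proper_term_size[OF that] Suc.prems \<open>N' = Suc N''\<close> by simp
    then show ?thesis
      unfolding Suc cinv_aux.simps
      by (intro arg_cong[where f = prod_list] map_cong arg_cong[where f = uminus]
            arg_cong[where f = sum_list]) auto
  qed
qed

lemma cinv_Nil [simp]: "cinv chi [] = 1"
  by (simp add: cinv_def)

lemma cinv_append: "cinv chi (u @ v) = cinv chi u * cinv chi v"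
proof -
  have split: "cinv_aux chi N (u @ v) = cinv_aux chi N u * cinv_aux chi N v" for N
    by (cases N) simp_all
  show ?thesis
    unfolding cinv_def split[of "fnodes (u @ v)"]
    using cinv_aux_fuel[of u "fnodes (u @ v)" "fnodes u" chi]
          cinv_aux_fuel[of v "fnodes (u @ v)" "fnodes v" chi] by simp
qed

lemma cinv_single:
  "cinv chi [Node ts] = - (\<Sum>(u, v)\<leftarrow>fcop ts. cinv chi u * chi [Node v])"
proof -
  have fuel: "cinv_aux chi (fnodes ts) u = cinv chi u" if "(u, v) \<in> set (fcop ts)" for u v
    using cinv_aux_fuel[of u "fnodes ts" "fnodes u"] fcop_pruned_size[of ts "(u, v)"]
          tcop_pruned_size that unfolding cinv_def by auto
  have "cinv chi [Node ts] = - (\<Sum>(u, v)\<leftarrow>fcop ts. cinv_aux chi (fnodes ts) u * chi [Node v])"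
    by (simp add: cinv_def tcop_Node o_def split_def)
  also have "\<dots> = - (\<Sum>(u, v)\<leftarrow>fcop ts. cinv chi u * chi [Node v])"
    using fuel by (intro arg_cong[where f = uminus] arg_cong[where f = sum_list] map_cong) auto
  finally show ?thesis .
qed

lemma phi_Nil [simp]: "phi F s z [] = 1"
  by (simp add: phi_def)

lemma phi_append: "phi F s z (u @ v) = phi F s z u * phi F s z v"
  by (simp add: phi_def)

lemma phi_scaling:
  assumes "s > 0"
  shows "phi F s z w = s powr (- (z * real (fnodes w))) * prod_list (map (vprod F z) w)"
proof (induction w)
  case (Cons t w)
  have "s powr (- (z * real (nodes t))) * s powr (- (z * real (fnodes w)))
        = s powr (- (z * real (fnodes (t # w))))"
    by (simp add: powr_add[symmetric] algebra_simps)
  with Cons show ?case by (simp add: phi_def algebra_simps)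
qed (use assms in \<open>simp add: phi_def\<close>)

lemma phi_change_scale:
  "s > 0 \<Longrightarrow> m > 0 \<Longrightarrow> phi F s z w = exp (- ln (s / m) * z * real (fnodes w)) * phi F m z w"
  by (simp add: phi_scaling powr_def ln_div exp_add[symmetric] algebra_simps)

text \<open>\<open>root_factor F m \<kappa> z\<close> is the value of \<open>\<phi>\<^sub>m\<close> at the root of \<open>B\<^sub>+(b)\<close> when \<open>b\<close>
  has \<open>\<kappa>\<close> nodes.\<close>

definition root_factor :: "(real \<Rightarrow> real) \<Rightarrow> real \<Rightarrow> real \<Rightarrow> real \<Rightarrow> real" where
  "root_factor F m \<kappa> z = m powr (- z) * F (z * (\<kappa> + 1))"

lemma phi_Node:
  assumes "m > 0"
  shows "phi F m z [Node v] = phi F m z v * root_factor F m (real (fnodes v)) z"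
proof -
  have "m powr (- (z * real (Suc (fnodes v)))) = m powr (- z) * m powr (- (z * real (fnodes v)))"
    by (simp add: powr_add[symmetric] algebra_simps)
  with assms show ?thesis by (simp add: phi_scaling root_factor_def algebra_simps)
qed

definition term_val :: "(real \<Rightarrow> real) \<Rightarrow> real \<Rightarrow> rtree list \<times> rtree list \<Rightarrow> real \<Rightarrow> real" where
  "term_val F m x z = cinv (phi F m z) (fst x) * phi F m z (snd x)"

definition trunk_size :: "rtree list \<times> rtree list \<Rightarrow> real" where
  "trunk_size x = real (fnodes (snd x))"

lemma term_val_unit: "term_val F m ([], []) z = 1"
  by (simp add: term_val_def)

lemma term_val_mult:
  "term_val F m (fst x @ fst y, snd x @ snd y) z = term_val F m x z * term_val F m y z"
  by (simp add: term_val_def cinv_append phi_append)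

lemma term_val_graft:
  "m > 0 \<Longrightarrow> term_val F m (u, [Node v]) z = term_val F m (u, v) z * root_factor F m (trunk_size (u, v)) z"
  by (simp add: term_val_def trunk_size_def phi_Node)

lemma term_val_root:
  "m > 0 \<Longrightarrow> term_val F m ([Node ts], []) z
     = - (\<Sum>x\<leftarrow>fcop ts. term_val F m x z * root_factor F m (trunk_size x) z)"
  by (simp add: term_val_def trunk_size_def cinv_single phi_Node split_def mult.assoc)

lemma phiR_term_expansion:
  assumes "m > 0" and "s > 0"
  shows "phiR F m s z w = (\<Sum>x\<leftarrow>fcop w. term_val F m x z * exp (- ln (s / m) * z * trunk_size x))"
  unfolding phiR_def conv_def
  by (intro arg_cong[where f = sum_list] map_cong)
     (auto simp: term_val_def trunk_size_def phi_change_scale[OF assms(2,1)])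

definition series_tail :: "(nat \<Rightarrow> real) \<Rightarrow> nat \<Rightarrow> real \<Rightarrow> real" where
  "series_tail c N x = (\<Sum>p. c (p + N) * x ^ p)"

lemma summable_series_tail:
  assumes "summable (\<lambda>p. c p * (x::real) ^ p)"
  shows "summable (\<lambda>p. c (p + N) * x ^ p)"
proof (cases "x = 0")
  case False
  have "summable (\<lambda>p. c (p + N) * x ^ (p + N))"
    using summable_iff_shift[of "\<lambda>p. c p * x ^ p" N] assms by simp
  then have "summable (\<lambda>p. x ^ N * (c (p + N) * x ^ p))"
    by (simp add: power_add algebra_simps)
  with False show ?thesis by simp
qed simp

lemma power_series_split:
  assumes "summable (\<lambda>p. c p * (x::real) ^ p)"
  shows "(\<Sum>p. c p * x ^ p) = (\<Sum>p<N. c p * x ^ p) + x ^ N * series_tail c N x"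
proof -
  have "(\<Sum>p. c p * x ^ p) = (\<Sum>p. x ^ N * (c (p + N) * x ^ p)) + (\<Sum>p<N. c p * x ^ p)"
    using suminf_split_initial_segment[OF assms, of N] by (simp add: power_add algebra_simps)
  also have "(\<Sum>p. x ^ N * (c (p + N) * x ^ p)) = x ^ N * series_tail c N x"
    unfolding series_tail_def by (rule suminf_mult[OF summable_series_tail[OF assms]])
  finally show ?thesis by simp
qed

lemma series_tail_tendsto:
  assumes "\<delta> > 0" and "\<forall>x. \<bar>x\<bar> < \<delta> \<longrightarrow> summable (\<lambda>p. c p * (x::real) ^ p)"
  shows "((\<lambda>z. series_tail c N (z * r)) \<longlongrightarrow> series_tail c N 0) (at 0)"
proof -
  have "summable (\<lambda>p. c (p + N) * (\<delta> / 2) ^ p)"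
    using assms by (intro summable_series_tail) auto
  then have "isCont (series_tail c N) 0"
    unfolding series_tail_def by (rule isCont_powser) (use assms in simp)
  moreover have "((\<lambda>z. z * r) \<longlongrightarrow> 0) (at (0::real))"
    by (intro tendsto_mult_left_zero tendsto_ident_at)
  ultimately show ?thesis by (rule isCont_tendsto_compose)
qed

definition laurent_simple_pole :: "(real \<Rightarrow> real) \<Rightarrow> real \<Rightarrow> (nat \<Rightarrow> real) \<Rightarrow> real \<Rightarrow> bool" where
  "laurent_simple_pole F a c \<delta> \<longleftrightarrow> \<delta> > 0
     \<and> (\<forall>x. \<bar>x\<bar> < \<delta> \<longrightarrow> summable (\<lambda>p. c p * x ^ p))
     \<and> (\<forall>x. F x = a / x + (\<Sum>p. c p * x ^ p))"

lemma laurent_expansion: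
  assumes "laurent_simple_pole F a c \<delta>" and "x \<noteq> 0" and "\<bar>x\<bar> < \<delta>" and "j > 0"
  shows "x ^ j * F x = a * x ^ (j - 1) + (\<Sum>p<N. c p * x ^ (j + p)) + x ^ (j + N) * series_tail c N x"
proof -
  have "x ^ j = x * x ^ (j - 1)" using \<open>j > 0\<close> by (cases j) auto
  moreover have "F x = a / x + ((\<Sum>p<N. c p * x ^ p) + x ^ N * series_tail c N x)"
    using assms(1,3) power_series_split unfolding laurent_simple_pole_def by simp
  ultimately show ?thesis
    using \<open>x \<noteq> 0\<close> by (simp add: distrib_left sum_distrib_left power_add algebra_simps)
qed

lemma root_factor_pole:
  assumes "laurent_simple_pole F a c \<delta>" and "m > 0" and "\<kappa> \<ge> 0"
  shows "((\<lambda>z. z * root_factor F m \<kappa> z) \<longlongrightarrow> a / (\<kappa> + 1)) (at 0)"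
proof -
  have pole: "\<delta> > 0" "\<forall>x. \<bar>x\<bar> < \<delta> \<longrightarrow> summable (\<lambda>p. c p * x ^ p)"
    and F: "\<And>x. F x = a / x + series_tail c 0 x"
    using assms(1) unfolding laurent_simple_pole_def series_tail_def by auto
  have "((\<lambda>z. m powr (- z) * (a / (\<kappa> + 1) + z * series_tail c 0 (z * (\<kappa> + 1))))
          \<longlongrightarrow> m powr (- 0) * (a / (\<kappa> + 1) + 0 * series_tail c 0 0)) (at 0)"
    by (intro tendsto_intros series_tail_tendsto[OF pole]) (use assms(2) in auto)
  moreover have "m powr (- z) * (a / (\<kappa> + 1) + z * series_tail c 0 (z * (\<kappa> + 1)))
                   = z * root_factor F m \<kappa> z" if "z \<noteq> 0" for z
  proof -
    have "\<kappa> + 1 \<noteq> 0" using assms(3) by simp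
    then have "z * (a / (z * (\<kappa> + 1))) = a / (\<kappa> + 1)"
      using that by simp
    moreover have "z * root_factor F m \<kappa> z
        = m powr (- z) * (z * (a / (z * (\<kappa> + 1))) + z * series_tail c 0 (z * (\<kappa> + 1)))"
      by (simp only: root_factor_def F distrib_left mult.left_commute)
    ultimately show ?thesis by simp
  qed
  ultimately show ?thesis
    using assms(2) by (auto intro: Lim_transform_eventually simp: eventually_at_filter)
qed

lemma tendsto_sum_list:
  fixes f :: "'x \<Rightarrow> 'b \<Rightarrow> real"
  assumes "\<And>x. x \<in> set X \<Longrightarrow> (f x \<longlongrightarrow> l x) F"
  shows "((\<lambda>z. \<Sum>x\<leftarrow>X. f x z) \<longlongrightarrow> (\<Sum>x\<leftarrow>X. l x)) F"
  using assms by (induction X) (auto intro: tendsto_add)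

lemma sum_list_sum_swap:
  "(\<Sum>x\<leftarrow>X. \<Sum>i\<in>A. f x i) = (\<Sum>i\<in>A. \<Sum>x\<leftarrow>X. (f x i :: real))"
  by (induction X) (auto simp: sum.distrib)

definition moment :: "('x \<Rightarrow> real \<Rightarrow> real) \<Rightarrow> ('x \<Rightarrow> real) \<Rightarrow> 'x list \<Rightarrow> nat \<Rightarrow> real \<Rightarrow> real" where
  "moment v k X j z = (\<Sum>x\<leftarrow>X. v x z * (z * k x) ^ j)"

definition moment_data ::
  "('x \<Rightarrow> real \<Rightarrow> real) \<Rightarrow> ('x \<Rightarrow> real) \<Rightarrow> 'x list \<Rightarrow> nat \<Rightarrow> (nat \<Rightarrow> real) \<Rightarrow> bool" where
  "moment_data v k X n M \<longleftrightarrow>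
     (\<forall>x\<in>set X. 0 \<le> k x \<and> k x \<le> real n)
   \<and> (\<forall>x\<in>set X. \<exists>l. ((\<lambda>z. z ^ n * v x z) \<longlongrightarrow> l) (at 0))
   \<and> (\<forall>j. (moment v k X j \<longlongrightarrow> M j) (at 0))
   \<and> (\<forall>j>n. M j = 0)"

lemma moment_data_unit:
  assumes "\<And>z. v e z = 1" and "k e = 0"
  shows "moment_data v k [e] 0 (\<lambda>j. if j = 0 then 1 else 0)"
proof -
  have "moment v k [e] j = (\<lambda>z. if j = 0 then 1 else 0)" for j
    using assms by (auto simp: moment_def)
  moreover have "((\<lambda>z. z ^ 0 * v e z) \<longlongrightarrow> 1) (at 0)"
    using assms by simp
  ultimately show ?thesis using assms by (auto simp: moment_data_def)
qed

definition binomial_conv :: "(nat \<Rightarrow> real) \<Rightarrow> (nat \<Rightarrow> real) \<Rightarrow> nat \<Rightarrow> real" where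
  "binomial_conv A B j = (\<Sum>i\<le>j. real (j choose i) * A i * B (j - i))"

lemma sum_list_product:
  "(\<Sum>x\<leftarrow>X. \<Sum>y\<leftarrow>Y. f x * g y) = (\<Sum>x\<leftarrow>X. f x) * (\<Sum>y\<leftarrow>Y. g y :: real)"
  by (simp add: sum_list_const_mult sum_list_mult_const)

lemma moment_mult:
  assumes "\<And>x y z. v (h x y) z = v x z * v y z" and "\<And>x y. k (h x y) = k x + k y"
  shows "moment v k [h x y. x \<leftarrow> X, y \<leftarrow> Y] j z
           = binomial_conv (\<lambda>i. moment v k X i z) (\<lambda>i. moment v k Y i z) j"
proof -
  have "moment v k [h x y. x \<leftarrow> X, y \<leftarrow> Y] j z
      = (\<Sum>x\<leftarrow>X. \<Sum>y\<leftarrow>Y. v x z * v y z * (z * k x + z * k y) ^ j)"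
    by (induction X) (simp_all add: moment_def assms o_def distrib_left)
  also have "\<dots> = (\<Sum>x\<leftarrow>X. \<Sum>y\<leftarrow>Y. \<Sum>i\<le>j. real (j choose i)
                    * ((v x z * (z * k x) ^ i) * (v y z * (z * k y) ^ (j - i))))"
    by (simp add: binomial_ring sum_distrib_left mult_ac)
  also have "\<dots> = (\<Sum>i\<le>j. real (j choose i)
                    * (\<Sum>x\<leftarrow>X. \<Sum>y\<leftarrow>Y. (v x z * (z * k x) ^ i) * (v y z * (z * k y) ^ (j - i))))"
    by (simp add: sum_list_sum_swap sum_list_const_mult)
  also have "\<dots> = binomial_conv (\<lambda>i. moment v k X i z) (\<lambda>i. moment v k Y i z) j"
    unfolding binomial_conv_def moment_def sum_list_product by (simp add: mult.assoc)
  finally show ?thesis .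
qed

lemma binomial_conv_vanishes:
  assumes "\<forall>j>n1. A j = 0" and "\<forall>j>n2. B j = 0" and "j > n1 + n2"
  shows "binomial_conv A B j = 0"
  unfolding binomial_conv_def
proof (intro sum.neutral ballI)
  fix i assume "i \<in> {..j}"
  then have "i > n1 \<or> j - i > n2" using assms(3) by auto
  then show "real (j choose i) * A i * B (j - i) = 0" using assms(1,2) by auto
qed

lemma binomial_conv_top:
  assumes "\<forall>j>n1. A j = 0" and "\<forall>j>n2. B j = 0"
  shows "binomial_conv A B (n1 + n2) = real (n1 + n2 choose n1) * A n1 * B n2"
proof -
  have "(\<Sum>i\<in>{..n1 + n2} - {n1}. real ((n1 + n2) choose i) * A i * B (n1 + n2 - i)) = 0"
  proof (rule sum.neutral, rule ballI)
    fix i assume "i \<in> {..n1 + n2} - {n1}"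
    then have "i > n1 \<or> n1 + n2 - i > n2" by auto
    then show "real ((n1 + n2) choose i) * A i * B (n1 + n2 - i) = 0" using assms by auto
  qed
  then have "binomial_conv A B (n1 + n2)
               = real ((n1 + n2) choose n1) * A n1 * B (n1 + n2 - n1)"
    unfolding binomial_conv_def by (subst sum.remove[of _ n1]) auto
  then show ?thesis by simp
qed

lemma moment_data_mult:
  assumes X: "moment_data v k X n1 M1" and Y: "moment_data v k Y n2 M2"
    and mult: "\<And>x y z. v (h x y) z = v x z * v y z" and add: "\<And>x y. k (h x y) = k x + k y"
  shows "moment_data v k [h x y. x \<leftarrow> X, y \<leftarrow> Y] (n1 + n2) (binomial_conv M1 M2)"
proof -
  let ?XY = "[h x y. x \<leftarrow> X, y \<leftarrow> Y]"
  have sizes: "0 \<le> k w \<and> k w \<le> real (n1 + n2)" if "w \<in> set ?XY" for w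
    using X Y that by (force simp: moment_data_def add)
  have poles: "\<exists>l. ((\<lambda>z. z ^ (n1 + n2) * v w z) \<longlongrightarrow> l) (at 0)" if w: "w \<in> set ?XY" for w
  proof -
    obtain x y where xy: "x \<in> set X" "y \<in> set Y" "w = h x y"
      using w by auto
    obtain l1 l2 where "((\<lambda>z. z ^ n1 * v x z) \<longlongrightarrow> l1) (at 0)" "((\<lambda>z. z ^ n2 * v y z) \<longlongrightarrow> l2) (at 0)"
      using X Y xy unfolding moment_data_def by meson
    then have "((\<lambda>z. (z ^ n1 * v x z) * (z ^ n2 * v y z)) \<longlongrightarrow> l1 * l2) (at 0)"
      by (rule tendsto_mult)
    then show ?thesis by (auto simp: xy mult power_add mult_ac)
  qed
  have limits: "(moment v k ?XY j \<longlongrightarrow> binomial_conv M1 M2 j) (at 0)" for j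
    using X Y unfolding moment_mult[OF mult add, abs_def] binomial_conv_def moment_data_def
    by (auto intro!: tendsto_intros)
  have "binomial_conv M1 M2 j = 0" if "j > n1 + n2" for j
    using X Y binomial_conv_vanishes that unfolding moment_data_def by blast
  with sizes poles limits show ?thesis unfolding moment_data_def by blast
qed

text \<open>This disposes of all truncation remainders.\<close>

lemma remainder_vanishes:
  fixes v R :: "'x \<Rightarrow> real \<Rightarrow> real"
  assumes "\<forall>x\<in>set X. \<exists>l. ((\<lambda>z. z ^ n * v x z) \<longlongrightarrow> l) (at 0)"
    and "\<forall>x\<in>set X. \<exists>l. (R x \<longlongrightarrow> l) (at 0)" and "j > 0"
  shows "((\<lambda>z. \<Sum>x\<leftarrow>X. (z ^ n * v x z) * (z ^ j * R x z)) \<longlongrightarrow> 0) (at 0)"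
proof -
  have each: "((\<lambda>z. (z ^ n * v x z) * (z ^ j * R x z)) \<longlongrightarrow> 0) (at 0)" if x: "x \<in> set X" for x
  proof -
    obtain l1 l2 where pole: "((\<lambda>z. z ^ n * v x z) \<longlongrightarrow> l1) (at 0)" and R: "(R x \<longlongrightarrow> l2) (at 0)"
      using assms(1,2) x by blast
    have "((\<lambda>z. (z ^ n * v x z) * (z ^ j * R x z)) \<longlongrightarrow> l1 * (0 ^ j * l2)) (at 0)"
      by (rule tendsto_mult[OF pole tendsto_mult[OF tendsto_power[OF tendsto_ident_at] R]])
    moreover have "l1 * (0 ^ j * l2) = 0" using \<open>j > 0\<close> by simp
    ultimately show ?thesis by simp
  qed
  have "((\<lambda>z. \<Sum>x\<leftarrow>X. (z ^ n * v x z) * (z ^ j * R x z)) \<longlongrightarrow> (\<Sum>x\<leftarrow>X. 0)) (at 0)"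
    by (rule tendsto_sum_list) (rule each)
  then show ?thesis by simp
qed

definition shifted_moment :: "('x \<Rightarrow> real \<Rightarrow> real) \<Rightarrow> ('x \<Rightarrow> real) \<Rightarrow> 'x list \<Rightarrow> nat \<Rightarrow> real \<Rightarrow> real" where
  "shifted_moment v k X q z = (\<Sum>x\<leftarrow>X. v x z * (z * (k x + 1)) ^ q)"

lemma shifted_moment_limit:
  assumes "\<forall>j. (moment v k X j \<longlongrightarrow> M j) (at 0)"
  shows "(shifted_moment v k X q \<longlongrightarrow> M q) (at 0)"
proof -
  have expand: "shifted_moment v k X q z = (\<Sum>i\<le>q. real (q choose i) * moment v k X i z * z ^ (q - i))" for z
  proof -
    have "v x z * (z * (k x + 1)) ^ q
            = (\<Sum>i\<le>q. real (q choose i) * (v x z * (z * k x) ^ i) * z ^ (q - i))" for x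
      unfolding distrib_left mult_1_right binomial_ring sum_distrib_left
      by (intro sum.cong) (simp_all add: mult_ac)
    then have "shifted_moment v k X q z
                 = (\<Sum>x\<leftarrow>X. \<Sum>i\<le>q. real (q choose i) * (v x z * (z * k x) ^ i) * z ^ (q - i))"
      unfolding shifted_moment_def by simp
    then show ?thesis
      by (simp add: sum_list_sum_swap moment_def sum_list_const_mult sum_list_mult_const)
  qed
  have "((\<lambda>z. \<Sum>i\<le>q. real (q choose i) * moment v k X i z * z ^ (q - i))
          \<longlongrightarrow> (\<Sum>i\<le>q. real (q choose i) * M i * 0 ^ (q - i))) (at 0)"
    using assms by (intro tendsto_intros) auto
  moreover have "(\<Sum>i\<le>q. real (q choose i) * M i * 0 ^ (q - i)) = M q"
    by (subst sum.remove[of _ q]) (auto intro!: sum.neutral)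
  ultimately show ?thesis unfolding expand[abs_def] by simp
qed

text \<open>The list \<open>r # map g X\<close> models \<open>\<Delta>(B\<^sub>+(F))\<close>: the term
  \<open>r = B\<^sub>+(F) \<otimes> 1\<close> carries the counterterm, each term of \<open>\<Delta>(F)\<close> gets its trunk
  extended by the root.  The zeroth moment vanishes identically (the antipode
  property), the higher ones are expanded by the Laurent series of \<open>F\<close>.\<close>

lemma grafted_moment_zero:
  assumes root: "\<And>z. v r z = - (\<Sum>x\<leftarrow>X. v x z * root_factor F m (k x) z)"
    and graft: "\<And>x z. v (g x) z = v x z * root_factor F m (k x) z"
  shows "moment v k (r # map g X) 0 z = 0"
  by (simp add: moment_def root graft o_def)

lemma grafted_moment_expansion:
  assumes pole: "laurent_simple_pole F a c \<delta>"
    and sizes: "\<forall>x\<in>set X. 0 \<le> k x \<and> k x \<le> real n"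
    and r_size: "k r = 0"
    and graft: "\<And>x z. v (g x) z = v x z * root_factor F m (k x) z"
    and g_size: "\<And>x. k (g x) = k x + 1"
    and "j > 0" and "z \<noteq> 0" and small: "\<bar>z\<bar> * (real n + 1) < \<delta>"
  shows "moment v k (r # map g X) j z = m powr (- z) *
           (a * shifted_moment v k X (j - 1) z + (\<Sum>p<n. c p * shifted_moment v k X (j + p) z)
            + (\<Sum>x\<leftarrow>X. (z ^ n * v x z) * (z ^ j * ((k x + 1) ^ (j + n) * series_tail c n (z * (k x + 1))))))"
proof -
  have per_term: "v (g x) z * (z * k (g x)) ^ j = m powr (- z) *
          (a * (v x z * (z * (k x + 1)) ^ (j - 1)) + (\<Sum>p<n. c p * (v x z * (z * (k x + 1)) ^ (j + p)))
           + (z ^ n * v x z) * (z ^ j * ((k x + 1) ^ (j + n) * series_tail c n (z * (k x + 1)))))"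
    if "x \<in> set X" for x
  proof -
    define y where "y = z * (k x + 1)"
    have "\<bar>y\<bar> \<le> \<bar>z\<bar> * (real n + 1)"
      using sizes that by (auto simp: y_def abs_mult intro!: mult_left_mono)
    with small have "\<bar>y\<bar> < \<delta>" by linarith
    moreover have "y \<noteq> 0" using sizes that \<open>z \<noteq> 0\<close> by (auto simp: y_def)
    ultimately have expansion:
        "y ^ j * F y = a * y ^ (j - 1) + (\<Sum>p<n. c p * y ^ (j + p)) + y ^ (j + n) * series_tail c n y"
      using laurent_expansion[OF pole] \<open>j > 0\<close> by blast
    have "v (g x) z * (z * k (g x)) ^ j = m powr (- z) * (v x z * (y ^ j * F y))"
      by (simp add: graft g_size root_factor_def y_def mult_ac)
    also have "\<dots> = m powr (- z) * (a * (v x z * y ^ (j - 1)) + (\<Sum>p<n. c p * (v x z * y ^ (j + p)))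
                       + (v x z * y ^ (j + n)) * series_tail c n y)"
      unfolding expansion by (simp add: sum_distrib_left distrib_left mult_ac)
    also have "\<dots> = m powr (- z) *
          (a * (v x z * (z * (k x + 1)) ^ (j - 1)) + (\<Sum>p<n. c p * (v x z * (z * (k x + 1)) ^ (j + p)))
           + (z ^ n * v x z) * (z ^ j * ((k x + 1) ^ (j + n) * series_tail c n (z * (k x + 1)))))"
      unfolding y_def by (simp add: power_mult_distrib power_add mult_ac)
    finally show ?thesis .
  qed
  have "moment v k (r # map g X) j z = (\<Sum>x\<leftarrow>X. v (g x) z * (z * k (g x)) ^ j)"
    using \<open>j > 0\<close> by (simp add: moment_def r_size o_def)
  also have "\<dots> = (\<Sum>x\<leftarrow>X. m powr (- z) *
          (a * (v x z * (z * (k x + 1)) ^ (j - 1)) + (\<Sum>p<n. c p * (v x z * (z * (k x + 1)) ^ (j + p)))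
           + (z ^ n * v x z) * (z ^ j * ((k x + 1) ^ (j + n) * series_tail c n (z * (k x + 1))))))"
    using per_term by (intro arg_cong[where f = sum_list] map_cong) auto
  finally show ?thesis
    by (simp add: shifted_moment_def sum_list_const_mult sum_list_addf sum_list_sum_swap)
qed

lemma eventually_small_nonzero:
  assumes "\<delta> > 0"
  shows "eventually (\<lambda>z::real. z \<noteq> 0 \<and> \<bar>z\<bar> * (real n + 1) < \<delta>) (at 0)"
proof -
  have "((\<lambda>z::real. \<bar>z\<bar> * (real n + 1)) \<longlongrightarrow> 0) (at 0)"
    by (intro tendsto_mult_left_zero tendsto_rabs_zero tendsto_ident_at)
  then have "eventually (\<lambda>z::real. \<bar>z\<bar> * (real n + 1) < \<delta>) (at 0)"
    using assms by (rule order_tendstoD(2))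
  then show ?thesis by (simp add: eventually_conj_iff eventually_neq_at_within)
qed

lemma powr_minus_tendsto_1:
  assumes "m > 0"
  shows "((\<lambda>z. m powr (- z)) \<longlongrightarrow> 1) (at (0::real))"
proof -
  have "((\<lambda>z. exp (- z * ln m)) \<longlongrightarrow> exp (- 0 * ln m)) (at (0::real))"
    by (intro tendsto_intros)
  with assms show ?thesis by (simp add: powr_def)
qed

lemma grafted_moment_limit:
  fixes v :: "'x \<Rightarrow> real \<Rightarrow> real" and k :: "'x \<Rightarrow> real"
  assumes pole: "laurent_simple_pole F a c \<delta>" and "m > 0"
    and data: "moment_data v k X n M" and r_size: "k r = 0"
    and graft: "\<And>x z. v (g x) z = v x z * root_factor F m (k x) z" and g_size: "\<And>x. k (g x) = k x + 1"
    and "j > 0"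
  shows "(moment v k (r # map g X) j \<longlongrightarrow> a * M (j - 1) + (\<Sum>p<n. c p * M (j + p))) (at 0)"
proof -
  from data have sizes: "\<forall>x\<in>set X. 0 \<le> k x \<and> k x \<le> real n"
    and poles: "\<forall>x\<in>set X. \<exists>l. ((\<lambda>z. z ^ n * v x z) \<longlongrightarrow> l) (at 0)"
    and limits: "\<forall>j. (moment v k X j \<longlongrightarrow> M j) (at 0)"
    unfolding moment_data_def by blast+
  have delta_pos: "\<delta> > 0" and conv: "\<forall>x. \<bar>x\<bar> < \<delta> \<longrightarrow> summable (\<lambda>p. c p * x ^ p)"
    using pole by (simp_all add: laurent_simple_pole_def)
  define Rem where "Rem x z = (k x + 1) ^ (j + n) * series_tail c n (z * (k x + 1))" for x z
  have "\<forall>x\<in>set X. \<exists>l. (Rem x \<longlongrightarrow> l) (at 0)"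
    unfolding Rem_def using tendsto_mult[OF tendsto_const series_tail_tendsto[OF delta_pos conv]] by blast
  then have "((\<lambda>z. \<Sum>x\<leftarrow>X. (z ^ n * v x z) * (z ^ j * Rem x z)) \<longlongrightarrow> 0) (at 0)"
    using remainder_vanishes poles \<open>j > 0\<close> by blast
  then have "((\<lambda>z. m powr (- z) * (a * shifted_moment v k X (j - 1) z
               + (\<Sum>p<n. c p * shifted_moment v k X (j + p) z)
               + (\<Sum>x\<leftarrow>X. (z ^ n * v x z) * (z ^ j * Rem x z))))
          \<longlongrightarrow> 1 * (a * M (j - 1) + (\<Sum>p<n. c p * M (j + p)) + 0)) (at 0)"
    using limits by (intro tendsto_intros powr_minus_tendsto_1 \<open>m > 0\<close> shifted_moment_limit)
  moreover have "eventually (\<lambda>z. m powr (- z) * (a * shifted_moment v k X (j - 1) z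
               + (\<Sum>p<n. c p * shifted_moment v k X (j + p) z)
               + (\<Sum>x\<leftarrow>X. (z ^ n * v x z) * (z ^ j * Rem x z))) = moment v k (r # map g X) j z) (at 0)"
    using eventually_small_nonzero[OF delta_pos, of n]
  proof eventually_elim
    case (elim z)
    with \<open>j > 0\<close> show ?case
      using grafted_moment_expansion[where v = v and k = k and r = r and g = g,
              OF pole sizes r_size graft g_size, of j z]
      by (simp add: Rem_def)
  qed
  ultimately show ?thesis by (auto intro: Lim_transform_eventually)
qed

lemma moment_data_graft:
  fixes v :: "'x \<Rightarrow> real \<Rightarrow> real" and k :: "'x \<Rightarrow> real"
  assumes pole: "laurent_simple_pole F a c \<delta>" and "m > 0"
    and data: "moment_data v k X n M"
    and root: "\<And>z. v r z = - (\<Sum>x\<leftarrow>X. v x z * root_factor F m (k x) z)" and r_size: "k r = 0"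
    and graft: "\<And>x z. v (g x) z = v x z * root_factor F m (k x) z" and g_size: "\<And>x. k (g x) = k x + 1"
  shows "moment_data v k (r # map g X) (Suc n)
           (\<lambda>j. if j = 0 then 0 else a * M (j - 1) + (\<Sum>p<n. c p * M (j + p)))"
    (is "moment_data v k ?Y _ ?M'")
proof -
  from data have sizes: "\<forall>x\<in>set X. 0 \<le> k x \<and> k x \<le> real n"
    and poles: "\<forall>x\<in>set X. \<exists>l. ((\<lambda>z. z ^ n * v x z) \<longlongrightarrow> l) (at 0)"
    and vanish: "\<forall>j>n. M j = 0"
    unfolding moment_data_def by blast+
  have grafted_pole: "\<exists>l. ((\<lambda>z. z ^ Suc n * v (g x) z) \<longlongrightarrow> l) (at 0)" if x: "x \<in> set X" for x
  proof -
    obtain l where "((\<lambda>z. z ^ n * v x z) \<longlongrightarrow> l) (at 0)" using poles x by blast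
    moreover have "((\<lambda>z. z * root_factor F m (k x) z) \<longlongrightarrow> a / (k x + 1)) (at 0)"
      using root_factor_pole[OF pole \<open>m > 0\<close>] sizes x by blast
    ultimately have "((\<lambda>z. (z ^ n * v x z) * (z * root_factor F m (k x) z)) \<longlongrightarrow> l * (a / (k x + 1))) (at 0)"
      by (rule tendsto_mult)
    then show ?thesis by (auto simp: graft mult_ac)
  qed
  then obtain L where L: "\<forall>x\<in>set X. ((\<lambda>z. z ^ Suc n * v (g x) z) \<longlongrightarrow> L x) (at 0)"
    by metis
  have Y_poles: "\<exists>l. ((\<lambda>z. z ^ Suc n * v y z) \<longlongrightarrow> l) (at 0)" if "y \<in> set ?Y" for y
  proof (cases "y = r")
    case True
    have "z ^ Suc n * v r z = - (\<Sum>x\<leftarrow>X. z ^ Suc n * v (g x) z)" for z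
      by (simp add: root graft sum_list_const_mult)
    moreover have "((\<lambda>z. - (\<Sum>x\<leftarrow>X. z ^ Suc n * v (g x) z)) \<longlongrightarrow> - (\<Sum>x\<leftarrow>X. L x)) (at 0)"
      using L by (intro tendsto_minus tendsto_sum_list) auto
    ultimately show ?thesis using True by auto
  next
    case False
    with that grafted_pole show ?thesis by auto
  qed
  have Y_limits: "(moment v k ?Y j \<longlongrightarrow> ?M' j) (at 0)" for j
  proof (cases "j = 0")
    case True
    have "moment v k ?Y 0 = (\<lambda>z. 0)"
      by (rule ext) (rule grafted_moment_zero[where v = v and r = r, OF root graft])
    with True show ?thesis by simp
  next
    case False
    then show ?thesis
      using grafted_moment_limit[OF pole \<open>m > 0\<close> data r_size graft g_size] by simp
  qed
  have Y_sizes: "\<forall>y\<in>set ?Y. 0 \<le> k y \<and> k y \<le> real (Suc n)"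
    using sizes by (auto simp: r_size g_size)
  have "\<forall>j>Suc n. ?M' j = 0"
    using vanish by simp
  with Y_sizes Y_poles Y_limits show ?thesis unfolding moment_data_def by blast
qed

lemma exp_series_split:
  "exp (y::real) = (\<Sum>j<N. inverse (fact j) * y ^ j) + y ^ N * series_tail (\<lambda>j. inverse (fact j)) N y"
proof -
  have "exp y = (\<Sum>j. inverse (fact j) * y ^ j)"
    using exp_converges[of y] by (simp add: sums_iff divide_inverse mult.commute)
  then show ?thesis using power_series_split[OF summable_exp] by simp
qed

lemma moment_generating_limit:
  assumes data: "moment_data v k X n M"
  shows "((\<lambda>z. \<Sum>x\<leftarrow>X. v x z * exp (t * z * k x)) \<longlongrightarrow> (\<Sum>j\<le>n. t ^ j / fact j * M j)) (at 0)"
proof -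
  define Rem where "Rem x z = (t * k x) ^ Suc n * series_tail (\<lambda>j. inverse (fact j)) (Suc n) (z * (t * k x))"
    for x z
  have per_term: "v x z * exp (t * z * k x)
      = (\<Sum>j\<le>n. t ^ j / fact j * (v x z * (z * k x) ^ j)) + (z ^ n * v x z) * (z ^ 1 * Rem x z)" for x z
  proof -
    define y where "y = z * (t * k x)"
    have "v x z * exp y = (\<Sum>j\<le>n. v x z * (inverse (fact j) * y ^ j))
                          + v x z * y ^ Suc n * series_tail (\<lambda>j. inverse (fact j)) (Suc n) y"
      using exp_series_split[of y "Suc n"]
      by (simp add: lessThan_Suc_atMost sum_distrib_left distrib_left mult.assoc)
    then show ?thesis
      by (simp add: Rem_def y_def power_mult_distrib divide_inverse mult_ac)
  qed
  have "((\<lambda>z. \<Sum>x\<leftarrow>X. (z ^ n * v x z) * (z ^ 1 * Rem x z)) \<longlongrightarrow> 0) (at 0)"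
  proof (rule remainder_vanishes)
    have "\<forall>x. \<bar>x\<bar> < 1 \<longrightarrow> summable (\<lambda>p. inverse (fact p) * (x::real) ^ p)"
      using summable_exp by blast
    from tendsto_mult[OF tendsto_const series_tail_tendsto[OF zero_less_one this]]
    show "\<forall>x\<in>set X. \<exists>l. (Rem x \<longlongrightarrow> l) (at 0)" unfolding Rem_def by blast
  qed (use data in \<open>simp_all add: moment_data_def\<close>)
  moreover have "((\<lambda>z. \<Sum>j\<le>n. t ^ j / fact j * moment v k X j z) \<longlongrightarrow> (\<Sum>j\<le>n. t ^ j / fact j * M j)) (at 0)"
    using data unfolding moment_data_def by (intro tendsto_intros) auto
  ultimately have "((\<lambda>z. (\<Sum>j\<le>n. t ^ j / fact j * moment v k X j z)
                       + (\<Sum>x\<leftarrow>X. (z ^ n * v x z) * (z ^ 1 * Rem x z)))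
                   \<longlongrightarrow> (\<Sum>j\<le>n. t ^ j / fact j * M j) + 0) (at 0)"
    by (intro tendsto_add)
  moreover have "(\<Sum>x\<leftarrow>X. v x z * exp (t * z * k x))
      = (\<Sum>j\<le>n. t ^ j / fact j * moment v k X j z) + (\<Sum>x\<leftarrow>X. (z ^ n * v x z) * (z ^ 1 * Rem x z))" for z
    by (simp only: per_term sum_list_addf sum_list_sum_swap sum_list_const_mult moment_def)
  ultimately show ?thesis by simp
qed

definition moment_poly :: "(nat \<Rightarrow> real) \<Rightarrow> nat \<Rightarrow> real poly" where
  "moment_poly M n = (\<Sum>j\<le>n. monom ((- 1) ^ j * M j / fact j) j)"

lemma poly_moment_poly: "poly (moment_poly M n) L = (\<Sum>j\<le>n. (- L) ^ j / fact j * M j)"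
  unfolding moment_poly_def poly_sum poly_monom
  by (intro sum.cong) (simp_all add: power_minus[of L])

lemma degree_moment_poly: "degree (moment_poly M n) \<le> n"
  unfolding moment_poly_def
  by (intro degree_sum_le) (auto intro: order.trans[OF degree_monom_le])

lemma leading_coeff_moment_poly: "coeff (moment_poly M n) n = (- 1) ^ n * M n / fact n"
  by (simp add: moment_poly_def coeff_sum)

definition cop_moments ::
  "(real \<Rightarrow> real) \<Rightarrow> real \<Rightarrow> real \<Rightarrow> (rtree list \<times> rtree list) list \<Rightarrow> nat \<Rightarrow> nat \<Rightarrow> bool" where
  "cop_moments F m a X n f \<longleftrightarrow>
     (\<exists>M. moment_data (term_val F m) trunk_size X n M \<and> M n = fact n * a ^ n / real f)"

lemma binomial_leading_term:
  "real (n1 + n2 choose n1) * (fact n1 * a ^ n1 / f1) * (fact n2 * a ^ n2 / f2)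
     = fact (n1 + n2) * a ^ (n1 + n2) / (f1 * f2 :: real)"
  by (simp add: binomial_fact power_add field_simps)

lemma graft_leading_term:
  "a * (fact n * a ^ n / f) = fact (Suc n) * a ^ Suc n / (real (Suc n) * f :: real)"
proof -
  have "fact (Suc n) * a ^ Suc n / (real (Suc n) * f)
          = real (Suc n) * (a * (fact n * a ^ n)) / (real (Suc n) * f)"
    by (simp only: fact_Suc of_nat_fact power_Suc mult_ac)
  also have "\<dots> = a * (fact n * a ^ n) / f"
    by (rule mult_divide_mult_cancel_left) simp
  finally show ?thesis by simp
qed

lemma cop_moments_forest:
  assumes "\<forall>t\<in>set w. cop_moments F m a (tcop t) (nodes t) (tfact t)"
  shows "cop_moments F m a (fcop w) (fnodes w) (ffact w)"
  using assms
proof (induction w)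
  case Nil
  have "moment_data (term_val F m) trunk_size [([], [])] 0 (\<lambda>j. if j = 0 then 1 else 0)"
    by (rule moment_data_unit) (simp_all add: term_val_unit trunk_size_def)
  then show ?case by (auto simp: cop_moments_def ffact_def)
next
  case (Cons t ws)
  obtain M1 where M1: "moment_data (term_val F m) trunk_size (tcop t) (nodes t) M1"
      "M1 (nodes t) = fact (nodes t) * a ^ nodes t / real (tfact t)"
    using Cons.prems unfolding cop_moments_def by auto
  obtain M2 where M2: "moment_data (term_val F m) trunk_size (fcop ws) (fnodes ws) M2"
      "M2 (fnodes ws) = fact (fnodes ws) * a ^ fnodes ws / real (ffact ws)"
    using Cons unfolding cop_moments_def by auto
  have "moment_data (term_val F m) trunk_size (fcop (t # ws)) (fnodes (t # ws)) (binomial_conv M1 M2)"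
    unfolding fcop_Cons fnodes_Cons
    by (rule moment_data_mult[OF M1(1) M2(1)]) (simp_all add: term_val_mult trunk_size_def)
  moreover have "binomial_conv M1 M2 (nodes t + fnodes ws)
      = real (nodes t + fnodes ws choose nodes t) * M1 (nodes t) * M2 (fnodes ws)"
    using M1(1) M2(1) unfolding moment_data_def by (intro binomial_conv_top) auto
  moreover have "\<dots> = fact (nodes t + fnodes ws) * a ^ (nodes t + fnodes ws) / real (ffact (t # ws))"
    unfolding M1(2) M2(2) binomial_leading_term by (simp add: ffact_def)
  ultimately show ?case unfolding cop_moments_def by auto
qed

lemma cop_moments_tree:
  assumes pole: "laurent_simple_pole F a c \<delta>" and "m > 0"
  shows "cop_moments F m a (tcop t) (nodes t) (tfact t)"
proof (induction t)
  case (Node ts)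
  let ?n = "fnodes ts"
  obtain M where M: "moment_data (term_val F m) trunk_size (fcop ts) ?n M"
      "M ?n = fact ?n * a ^ ?n / real (ffact ts)"
    using cop_moments_forest Node.IH unfolding cop_moments_def by blast
  let ?M' = "\<lambda>j. if j = 0 then 0 else a * M (j - 1) + (\<Sum>p<?n. c p * M (j + p))"
  have "moment_data (term_val F m) trunk_size (tcop (Node ts)) (Suc ?n) ?M'"
    unfolding tcop_Node
    by (rule moment_data_graft[OF pole \<open>m > 0\<close> M(1)])
       (auto simp: term_val_root term_val_graft \<open>m > 0\<close> trunk_size_def split: prod.split)
  moreover have "?M' (Suc ?n) = a * M ?n"
    using M(1) by (simp add: moment_data_def)
  moreover have "a * M ?n = fact (Suc ?n) * a ^ Suc ?n / real (tfact (Node ts))"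
  proof -
    have "real (tfact (Node ts)) = real (Suc ?n) * real (ffact ts)"
      by (simp add: ffact_def algebra_simps)
    then show ?thesis unfolding M(2) graft_leading_term by simp
  qed
  ultimately show ?case unfolding cop_moments_def by auto
qed

theorem mainTheorem8:
  fixes f :: "real \<Rightarrow> real" and c \<epsilon> \<delta> \<mu> cm :: real and cn :: "nat \<Rightarrow> real"
    and w :: "rtree list"
  assumes f_cont: "continuous_on {0..} f"
    and eps_pos: "\<epsilon> > 0"
    and f_asymp: "(\<lambda>\<zeta>. f \<zeta> - c / \<zeta>) \<in> O[at_top](\<lambda>\<zeta>. \<zeta> powr (-1 - \<epsilon>))"
    and delta_pos: "\<delta> > 0"
    and conv_ser: "\<forall>z. \<bar>z\<bar> < \<delta> \<longrightarrow> summable (\<lambda>n. cn n * z ^ n)"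
    and mellin: "\<forall>z\<in>{0<..<\<delta>}.
                   ((\<lambda>\<zeta>. f \<zeta> * \<zeta> powr (- z)) has_integral Lser cm cn z) {0<..}"
    and mu_pos: "\<mu> > 0"
  shows "\<exists>p :: real poly.
           (\<forall>s>0. ((\<lambda>z. phiR (Lser cm cn) \<mu> s z w) \<longlongrightarrow> poly p (ln (s / \<mu>))) (at 0))
         \<and> degree p \<le> fnodes w
         \<and> coeff p (fnodes w) = (- cm) ^ fnodes w / real (ffact w)"
proof -
  let ?n = "fnodes w"
  have pole: "laurent_simple_pole (Lser cm cn) cm cn \<delta>"
    using delta_pos conv_ser by (simp add: laurent_simple_pole_def Lser_def)
  obtain M where M: "moment_data (term_val (Lser cm cn) \<mu>) trunk_size (fcop w) ?n M"
      "M ?n = fact ?n * cm ^ ?n / real (ffact w)"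
    using cop_moments_forest cop_moments_tree[OF pole mu_pos] unfolding cop_moments_def by blast
  have "((\<lambda>z. phiR (Lser cm cn) \<mu> s z w) \<longlongrightarrow> poly (moment_poly M ?n) (ln (s / \<mu>))) (at 0)"
    if "s > 0" for s
    using moment_generating_limit[OF M(1), of "- ln (s / \<mu>)"]
    by (simp add: phiR_term_expansion[OF mu_pos that] poly_moment_poly)
  moreover have "coeff (moment_poly M ?n) ?n = (- cm) ^ ?n / real (ffact w)"
    by (simp add: leading_coeff_moment_poly M(2) power_minus[of cm])
  ultimately show ?thesis
    using degree_moment_poly by blast
qed

end
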